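(* Let $\kappa$ be a regular cardinal with $\kappa\ge\aleph_2$. If there is a $(\kappa\times\omega_1)$-Prikry matrix, then $\binom{\kappa}{\aleph_1}\nrightarrow\binom{\aleph_0}{\aleph_1}_2$.
   Context: Work in ZFC. For a regular $\kappa\ge\aleph_2$, a $(\kappa\times\omega_1)$-Prikry matrix is a family $(A_{\alpha,\eta}:\alpha\in\kappa,\eta\in\omega_1)$ of subsets of $\omega_1$ such that: (i) for every $\alpha\in\kappa$ and $\zeta<\eta<\omega_1$, $A_{\alpha,\zeta}\cap A_{\alpha,\eta}=\varnothing$; (ii) for every $\alpha\in\kappa$, $\bigcup_{\eta\in\omega_1}A_{\alpha,\eta}=\omega_1$; (iii) for every sequence of pairwise distinct $\alpha_n\in\kappa$ ($n\in\omega$) and every sequence $(\eta_n:n\in\omega)$ of elements of $\omega_1$ (repetitions allowed), $|\omega_1\setminus\bigcup_{n\in\omega}A_{\alpha_n,\eta_n}|\le\aleph_0$. The relation $\binom{\lambda}{\kappa}\rightarrow\binom{\alpha}{\beta}_\chi$ means: for every $c:\lambda\times\kappa\rightarrow\chi$ there are $A\subseteq\lambda$, $B\subseteq\kappa$ with ${\rm otp}(A)=\alpha$, ${\rm otp}(B)=\beta$ and $c\upharpoonright(A\times B)$ constant; $\nrightarrow$ is its negation. *)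

theory Defs
  imports Main "HOL-Library.Countable_Set"
begin

text \<open>Cardinals/ordinals are represented by well-orders (HOL's BNF cardinal library).
  The regular cardinal kappa is a card order r with Field r as its underlying set;
  omega_1 is a well-order w order-isomorphic to cardSuc natLeq.\<close>

definition prikry_matrix :: "'k rel \<Rightarrow> 'w rel \<Rightarrow> ('k \<Rightarrow> 'w \<Rightarrow> 'w set) \<Rightarrow> bool" where
  "prikry_matrix r w A \<longleftrightarrow>
     (\<forall>\<alpha>\<in>Field r. \<forall>\<eta>\<in>Field w. A \<alpha> \<eta> \<subseteq> Field w) \<and>
     (\<forall>\<alpha>\<in>Field r. \<forall>\<zeta>\<in>Field w. \<forall>\<eta>\<in>Field w. \<zeta> \<noteq> \<eta> \<longrightarrow> A \<alpha> \<zeta> \<inter> A \<alpha> \<eta> = {}) \<and>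
     (\<forall>\<alpha>\<in>Field r. (\<Union>\<eta>\<in>Field w. A \<alpha> \<eta>) = Field w) \<and>
     (\<forall>(a::nat \<Rightarrow> 'k) (e::nat \<Rightarrow> 'w).
        inj a \<longrightarrow> range a \<subseteq> Field r \<longrightarrow> range e \<subseteq> Field w \<longrightarrow>
        countable (Field w - (\<Union>n. A (a n) (e n))))"

text \<open>The partition relation (lambda over kappa) -> (alpha over beta)_chi, with lambda, kappa, alpha,
  beta given as well-orders and chi colours given as a set of colours.\<close>
definition polarized_arrow ::
  "'a rel \<Rightarrow> 'b rel \<Rightarrow> 'c rel \<Rightarrow> 'd rel \<Rightarrow> 'e set \<Rightarrow> bool" where
  "polarized_arrow l k al be C \<longleftrightarrow>
     (\<forall>c. (\<forall>x\<in>Field l. \<forall>y\<in>Field k. c x y \<in> C) \<longrightarrow>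
        (\<exists>X Y i. X \<subseteq> Field l \<and> Y \<subseteq> Field k \<and>
           ordIso2 (Restr l X) al \<and> ordIso2 (Restr k Y) be \<and>
           (\<forall>x\<in>X. \<forall>y\<in>Y. c x y = i)))"

end

theory Submission
  imports Defs "HOL-Library.Countable_Set_Type"
begin

text \<open>Fix \<eta> and colour a pair (\<alpha>, \<beta>) by whether \<beta> \<in> A \<alpha> \<eta>.
  Suppose the colour is constant on X \<times> Y with X of order type \<omega> and Y of order type \<omega>1,
  and pick distinct \<alpha>0, \<alpha>1, ... in X. If the colour is false, Y misses the union of the
  A \<alpha>n \<eta>; if it is true, Y lies inside every A \<alpha>n \<eta> and so misses the union of the
  A \<alpha>n \<eta>' for any \<eta>' \<noteq> \<eta>. Either way the Prikry condition makes Y countable,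
  which is absurd.\<close>

unbundle cardinal_syntax

lemma infinite_Field_if_ordIso_natLeq:
  assumes "r =o natLeq"
  shows "infinite (Field r)"
proof -
  have "|Field r| =o |Field natLeq|" using assms card_of_cong by blast
  then show ?thesis using card_of_ordIso_finite Field_natLeq by (metis infinite_UNIV_nat)
qed

lemma uncountable_Field_if_ordIso_cardSuc_natLeq:
  assumes "r =o cardSuc natLeq"
  shows "uncountable (Field r)"
proof
  assume "countable (Field r)"
  then have "|Field r| \<le>o natLeq" by (simp add: countable_card_le_natLeq)
  moreover have "cardSuc natLeq =o |Field r|"
  proof -
    have "cardSuc natLeq =o |Field (cardSuc natLeq)|"
      using card_of_Field_ordIso cardSuc_Card_order natLeq_Card_order ordIso_symmetric by blast
    moreover have "|Field (cardSuc natLeq)| =o |Field r|"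
      using assms card_of_cong ordIso_symmetric by blast
    ultimately show ?thesis using ordIso_transitive by blast
  qed
  ultimately have "cardSuc natLeq \<le>o natLeq" using ordIso_ordLeq_trans by blast
  then show False using cardSuc_greater[OF natLeq_Card_order] not_ordLess_ordLeq by blast
qed

lemma prikry_matrix_disjoint:
  assumes "prikry_matrix r w A" and "\<alpha> \<in> Field r" and "\<zeta> \<in> Field w" and "\<eta> \<in> Field w"
    and "\<zeta> \<noteq> \<eta>"
  shows "A \<alpha> \<zeta> \<inter> A \<alpha> \<eta> = {}"
  using assms by (simp add: prikry_matrix_def)

lemma prikry_matrix_countable_complement:
  fixes a :: "nat \<Rightarrow> 'k" and e :: "nat \<Rightarrow> 'w"
  assumes "prikry_matrix r w A" and "inj a" and "range a \<subseteq> Field r" and "range e \<subseteq> Field w"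
  shows "countable (Field w - (\<Union>n. A (a n) (e n)))"
  using assms unfolding prikry_matrix_def by blast

lemma prikry_matrix_countable_if_disjoint_column:
  assumes "prikry_matrix r w A" and "X \<subseteq> Field r" and "infinite X"
    and "\<eta> \<in> Field w" and "Y \<subseteq> Field w" and "\<And>\<alpha>. \<alpha> \<in> X \<Longrightarrow> Y \<inter> A \<alpha> \<eta> = {}"
  shows "countable Y"
proof -
  obtain a :: "nat \<Rightarrow> _" where a: "inj a" "range a \<subseteq> X"
    using infinite_countable_subset[OF assms(3)] by blast
  have "countable (Field w - (\<Union>n. A (a n) \<eta>))"
    using prikry_matrix_countable_complement[OF assms(1) a(1), of "\<lambda>_. \<eta>"] a(2) assms(2,4)
    by auto
  moreover have "Y \<subseteq> Field w - (\<Union>n. A (a n) \<eta>)"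
    using assms(5,6) a(2) by blast
  ultimately show ?thesis by (rule countable_subset[rotated])
qed

lemma prikry_matrix_countable_if_inside_column:
  assumes "prikry_matrix r w A" and "X \<subseteq> Field r" and "infinite X"
    and "\<eta> \<in> Field w" and "\<eta>' \<in> Field w" and "\<eta> \<noteq> \<eta>'"
    and "Y \<subseteq> Field w" and "\<And>\<alpha>. \<alpha> \<in> X \<Longrightarrow> Y \<subseteq> A \<alpha> \<eta>"
  shows "countable Y"
proof (rule prikry_matrix_countable_if_disjoint_column[OF assms(1-3,5,7)])
  fix \<alpha> assume "\<alpha> \<in> X"
  then have "A \<alpha> \<eta> \<inter> A \<alpha> \<eta>' = {}"
    using prikry_matrix_disjoint[OF assms(1) _ assms(4-6)] assms(2) by blast
  then show "Y \<inter> A \<alpha> \<eta>' = {}" using assms(8) \<open>\<alpha> \<in> X\<close> by blast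
qed

lemma prikry_matrix_countable_if_homogeneous:
  assumes "prikry_matrix r w A" and "X \<subseteq> Field r" and "infinite X"
    and "\<eta> \<in> Field w" and "\<eta>' \<in> Field w" and "\<eta> \<noteq> \<eta>'"
    and "Y \<subseteq> Field w" and "\<forall>\<alpha>\<in>X. \<forall>\<beta>\<in>Y. (\<beta> \<in> A \<alpha> \<eta>) = i"
  shows "countable Y"
proof (cases i)
  case True
  then have "\<And>\<alpha>. \<alpha> \<in> X \<Longrightarrow> Y \<subseteq> A \<alpha> \<eta>" using assms(8) by blast
  then show ?thesis by (rule prikry_matrix_countable_if_inside_column[OF assms(1-7)])
next
  case False
  then have "\<And>\<alpha>. \<alpha> \<in> X \<Longrightarrow> Y \<inter> A \<alpha> \<eta> = {}" using assms(8) by blast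
  then show ?thesis by (rule prikry_matrix_countable_if_disjoint_column[OF assms(1-4,7)])
qed

lemma two_elements_if_infinite:
  assumes "infinite S"
  obtains x y where "x \<in> S" "y \<in> S" "x \<noteq> y"
proof -
  obtain x where x: "x \<in> S" using infinite_imp_nonempty[OF assms] by blast
  have "infinite (S - {x})" using assms by simp
  then obtain y where "y \<in> S - {x}" using infinite_imp_nonempty by blast
  then show ?thesis using x that by blast
qed

theorem claim2p3:
  fixes r :: "'k rel" and w :: "'w rel" and A :: "'k \<Rightarrow> 'w \<Rightarrow> 'w set"
  assumes "Card_order r" and "regularCard r"
    and "ordLeq2 (cardSuc (cardSuc natLeq)) r"
    and "Well_order w" and "ordIso2 w (cardSuc natLeq)"
    and "prikry_matrix r w A"
  shows "\<not> polarized_arrow r w natLeq w (UNIV :: bool set)"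
proof
  assume arrow: "polarized_arrow r w natLeq w (UNIV :: bool set)"
  have "infinite (Field w)"
    using uncountable_Field_if_ordIso_cardSuc_natLeq[OF assms(5)] countable_finite by blast
  then obtain \<eta> \<eta>' where \<eta>: "\<eta> \<in> Field w" "\<eta>' \<in> Field w" "\<eta> \<noteq> \<eta>'"
    by (rule two_elements_if_infinite)
  obtain X Y i where XY: "X \<subseteq> Field r" "Y \<subseteq> Field w" "Restr r X =o natLeq"
      "Restr w Y =o w" "\<forall>\<alpha>\<in>X. \<forall>\<beta>\<in>Y. (\<beta> \<in> A \<alpha> \<eta>) = i"
    using arrow[unfolded polarized_arrow_def, rule_format, of "\<lambda>\<alpha> \<beta>. \<beta> \<in> A \<alpha> \<eta>"] by auto
  have "infinite X"
    using infinite_Field_if_ordIso_natLeq[OF XY(3)] Field_Restr_subset[of r X] finite_subset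
    by blast
  have "uncountable (Field (Restr w Y))"
    using ordIso_transitive[OF XY(4) assms(5)] by (rule uncountable_Field_if_ordIso_cardSuc_natLeq)
  then have "uncountable Y"
    using Field_Restr_subset[of w Y] countable_subset by blast
  moreover have "countable Y"
    using prikry_matrix_countable_if_homogeneous[OF assms(6) XY(1) \<open>infinite X\<close> \<eta> XY(2,5)] .
  ultimately show False by blast
qed

end
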